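(* Let $P\subseteq\mathbb{C}$ be a finitely generated field extension of $\mathbb{Q}$ with $\sqrt{-1}\in P$, and let $q$ be a prime. If $a\in P$ is $q$-simple in $P$, then $a$ is $q$-simple in $P(\zeta)$, where $\zeta$ is a root of unity of order $q^t$, $t\ge1$.
   Context: $\mu$ is the group of all roots of unity in $\mathbb{C}^\times$. For a field $K\subseteq\mathbb{C}$ and integer $k>1$, a nonzero $a\in K$ is $k$-simple in $K$ if $a\notin\mu$ and for all $b\in K$, $\epsilon\in\mu$ and integers $d$, $a^d=b^k\epsilon$ implies $k\mid d$. *)

theory Defs
  imports Complex_Main "HOL-Computational_Algebra.Primes"
begin

definition is_subfield :: "complex set \<Rightarrow> bool" where
  "is_subfield K \<longleftrightarrow> 0 \<in> K \<and> 1 \<in> K \<and>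
     (\<forall>x\<in>K. \<forall>y\<in>K. x + y \<in> K \<and> x * y \<in> K) \<and>
     (\<forall>x\<in>K. - x \<in> K) \<and> (\<forall>x\<in>K. x \<noteq> 0 \<longrightarrow> inverse x \<in> K)"

definition gen_field :: "complex set \<Rightarrow> complex set" where
  "gen_field S = \<Inter>{K. is_subfield K \<and> S \<subseteq> K}"

definition adjoin :: "complex set \<Rightarrow> complex set \<Rightarrow> complex set" where
  "adjoin K S = gen_field (K \<union> S)"

definition fin_gen_over_Q :: "complex set \<Rightarrow> bool" where
  "fin_gen_over_Q K \<longleftrightarrow> (\<exists>S. finite S \<and> K = gen_field S)"

definition mu :: "complex set" where
  "mu = {z. \<exists>n::nat. n > 0 \<and> z ^ n = 1}"

definition root_of_unity_of_order :: "nat \<Rightarrow> complex \<Rightarrow> bool" where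
  "root_of_unity_of_order n z \<longleftrightarrow> n > 0 \<and> z ^ n = 1 \<and> (\<forall>m. 0 < m \<and> m < n \<longrightarrow> z ^ m \<noteq> 1)"

definition k_simple :: "complex set \<Rightarrow> nat \<Rightarrow> complex \<Rightarrow> bool" where
  "k_simple K k a \<longleftrightarrow> a \<in> K \<and> a \<noteq> 0 \<and> a \<notin> mu \<and>
     (\<forall>b\<in>K. \<forall>\<epsilon>\<in>mu. \<forall>d::int. a powi d = b ^ k * \<epsilon> \<longrightarrow> int k dvd d)"

end

theory Submission
  imports Defs "Jordan_Normal_Form.Determinant"
begin

text \<open>
  Let w be the root of unity of order q among the powers of \<zeta>. Adjoining w gives an
  extension of degree m < q; taking norms in a = c^q \<eta> yields a^m = N(c)^q N(\<eta>) with
  N(\<eta>) a root of unity, which q-simplicity forbids because q does not divide m.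

  The field P(w, \<zeta>) is then reached by successively adjoining roots \<omega> of unity with
  \<omega>^q in the current field F. If \<omega> is not in F, then F(\<omega>)/F is a cyclic Kummer
  extension of degree q, generated by \<sigma>: \<omega> \<mapsto> w \<omega>. Arguments in the style of Hilbert's
  Theorem 90 with \<sigma> show that an element whose q-th power lies in F has the form h \<omega>^s with
  h in F, and that E^q = f \<omega>^r with f in F forces q to divide r; for q = 2 this needs
  sqrt(-1) in F. Splitting \<eta> into a q-th power and a root of unity \<rho> of q-power order,
  these facts first put \<rho> into F and then c \<eta>^i into F \<omega>^s, so a would already be a
  q-th power times a root of unity in F.
\<close>


section \<open>Subfields of the complex numbers and polynomials over them\<close>

lemma subfield_zero: "is_subfield K \<Longrightarrow> 0 \<in> K"
  by (simp add: is_subfield_def)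

lemma subfield_one: "is_subfield K \<Longrightarrow> 1 \<in> K"
  by (simp add: is_subfield_def)

lemma subfield_add: "is_subfield K \<Longrightarrow> x \<in> K \<Longrightarrow> y \<in> K \<Longrightarrow> x + y \<in> K"
  by (simp add: is_subfield_def)

lemma subfield_mult: "is_subfield K \<Longrightarrow> x \<in> K \<Longrightarrow> y \<in> K \<Longrightarrow> x * y \<in> K"
  by (simp add: is_subfield_def)

lemma subfield_uminus: "is_subfield K \<Longrightarrow> x \<in> K \<Longrightarrow> - x \<in> K"
  by (simp add: is_subfield_def)

lemma subfield_inverse: "is_subfield K \<Longrightarrow> x \<in> K \<Longrightarrow> inverse x \<in> K"
  by (cases "x = 0") (auto simp add: is_subfield_def)

lemma subfield_diff: "is_subfield K \<Longrightarrow> x \<in> K \<Longrightarrow> y \<in> K \<Longrightarrow> x - y \<in> K"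
  using subfield_add[of K x "- y"] subfield_uminus[of K y] by simp

lemma subfield_divide: "is_subfield K \<Longrightarrow> x \<in> K \<Longrightarrow> y \<in> K \<Longrightarrow> x / y \<in> K"
  using subfield_mult[of K x "inverse y"] subfield_inverse[of K y] by (simp add: divide_inverse)

lemma subfield_power: "is_subfield K \<Longrightarrow> x \<in> K \<Longrightarrow> x ^ n \<in> K"
  by (induction n) (auto intro: subfield_one subfield_mult)

lemma subfield_power_int: "is_subfield K \<Longrightarrow> x \<in> K \<Longrightarrow> x powi n \<in> K"
  by (auto simp: power_int_def intro!: subfield_power subfield_inverse)

lemma subfield_sum: "is_subfield K \<Longrightarrow> (\<And>i. i \<in> A \<Longrightarrow> f i \<in> K) \<Longrightarrow> sum f A \<in> K"
  by (induction A rule: infinite_finite_induct) (auto intro: subfield_zero subfield_add)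

lemma subfield_prod: "is_subfield K \<Longrightarrow> (\<And>i. i \<in> A \<Longrightarrow> f i \<in> K) \<Longrightarrow> prod f A \<in> K"
  by (induction A rule: infinite_finite_induct) (auto intro: subfield_one subfield_mult)

lemma is_subfield_gen_field: "is_subfield (gen_field S)"
  unfolding gen_field_def is_subfield_def by auto

lemma gen_field_least: "is_subfield K \<Longrightarrow> S \<subseteq> K \<Longrightarrow> gen_field S \<subseteq> K"
  unfolding gen_field_def by auto

lemma is_subfield_adjoin: "is_subfield (adjoin K S)"
  unfolding adjoin_def by (rule is_subfield_gen_field)

lemma subset_adjoin: "K \<subseteq> adjoin K S"
  unfolding adjoin_def gen_field_def by auto

lemma generators_subset_adjoin: "S \<subseteq> adjoin K S"
  unfolding adjoin_def gen_field_def by auto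

lemma generator_in_adjoin: "x \<in> adjoin K {x}"
  using generators_subset_adjoin by blast

lemma adjoin_least: "is_subfield L \<Longrightarrow> K \<subseteq> L \<Longrightarrow> S \<subseteq> L \<Longrightarrow> adjoin K S \<subseteq> L"
  unfolding adjoin_def by (rule gen_field_least) auto

lemma adjoin_mono: "K \<subseteq> L \<Longrightarrow> adjoin K S \<subseteq> adjoin L S"
  by (meson adjoin_least subset_adjoin generators_subset_adjoin is_subfield_adjoin subset_trans)

lemma adjoin_subfield_eq: "is_subfield K \<Longrightarrow> S \<subseteq> K \<Longrightarrow> adjoin K S = K"
  using adjoin_least[of K K S] subset_adjoin[of K S] by blast

definition poly_over :: "complex set \<Rightarrow> complex poly \<Rightarrow> bool" where
  "poly_over K p \<longleftrightarrow> (\<forall>i. coeff p i \<in> K)"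

lemma poly_eq_sum_lessThan:
  assumes "degree (p :: complex poly) < n"
  shows "poly p z = (\<Sum>i<n. coeff p i * z ^ i)"
  unfolding poly_altdef by (rule sum.mono_neutral_left) (use assms in \<open>auto simp: coeff_eq_0\<close>)

context
  fixes K assumes K: "is_subfield K"
begin

lemma poly_over_0: "poly_over K 0"
  by (simp add: poly_over_def subfield_zero K)

lemma poly_over_const: "c \<in> K \<Longrightarrow> poly_over K [:c:]"
  by (auto simp: poly_over_def coeff_pCons subfield_zero K split: nat.splits)

lemma poly_over_1: "poly_over K 1"
  using poly_over_const[OF subfield_one[OF K]] by (simp add: one_pCons)

lemma poly_over_pCons_iff: "poly_over K (pCons c p) \<longleftrightarrow> c \<in> K \<and> poly_over K p"
  unfolding poly_over_def by (metis coeff_pCons_0 coeff_pCons_Suc coeff_pCons not0_implies_Suc)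

lemma poly_over_monom: "c \<in> K \<Longrightarrow> poly_over K (monom c n)"
  by (auto simp: poly_over_def subfield_zero K)

lemma poly_over_add: "poly_over K p \<Longrightarrow> poly_over K q \<Longrightarrow> poly_over K (p + q)"
  by (auto simp: poly_over_def intro: subfield_add[OF K])

lemma poly_over_uminus: "poly_over K p \<Longrightarrow> poly_over K (- p)"
  by (auto simp: poly_over_def intro: subfield_uminus[OF K])

lemma poly_over_diff: "poly_over K p \<Longrightarrow> poly_over K q \<Longrightarrow> poly_over K (p - q)"
  by (auto simp: poly_over_def intro: subfield_diff[OF K])

lemma poly_over_smult: "c \<in> K \<Longrightarrow> poly_over K p \<Longrightarrow> poly_over K (smult c p)"
  by (auto simp: poly_over_def intro: subfield_mult[OF K])

lemma poly_over_mult: "poly_over K p \<Longrightarrow> poly_over K q \<Longrightarrow> poly_over K (p * q)"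
  unfolding poly_over_def coeff_mult by (auto intro!: subfield_sum[OF K] subfield_mult[OF K])

lemma poly_over_sum: "(\<And>i. i \<in> A \<Longrightarrow> poly_over K (f i)) \<Longrightarrow> poly_over K (sum f A)"
  unfolding poly_over_def coeff_sum by (auto intro!: subfield_sum[OF K])

lemma poly_over_pcompose: "poly_over K p \<Longrightarrow> poly_over K r \<Longrightarrow> poly_over K (pcompose p r)"
  by (induction p rule: pCons_induct)
    (auto simp: pcompose_pCons poly_over_pCons_iff poly_over_0
      intro: poly_over_add poly_over_const poly_over_mult)

lemma poly_over_divmod:
  assumes "poly_over K g" "g \<noteq> 0" "poly_over K p"
  obtains s r where "poly_over K s" "poly_over K r" "p = g * s + r" "r = 0 \<or> degree r < degree g"
  using assms(3)
proof (induction "degree p" arbitrary: p thesis rule: less_induct)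
  case less
  show ?case
  proof (cases "p = 0 \<or> degree p < degree g")
    case True
    then show ?thesis using less.prems by (intro less.prems(1)[of 0 p]) (auto simp: poly_over_0)
  next
    case False
    then have "p \<noteq> 0" and deg: "degree g \<le> degree p" by auto
    define c where "c = lead_coeff p / lead_coeff g"
    define k where "k = degree p - degree g"
    have c: "c \<in> K" "c \<noteq> 0"
      unfolding c_def using assms less.prems \<open>p \<noteq> 0\<close>
      by (auto simp: poly_over_def intro: subfield_divide[OF K])
    have "degree (p - monom c k * g) < degree p" if "p - monom c k * g \<noteq> 0"
    proof (rule degree_less_if_less_eqI)
      show "degree (p - monom c k * g) \<le> degree p"
        using c assms(2) deg
        by (intro degree_diff_le) (simp_all add: degree_mult_eq degree_monom_eq k_def)
      show "coeff (p - monom c k * g) (degree p) = 0"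
        using assms(2) deg by (simp add: coeff_monom_mult c_def k_def)
    qed fact
    moreover have "poly_over K (p - monom c k * g)"
      by (intro poly_over_diff poly_over_mult poly_over_monom c less.prems assms)
    ultimately obtain s r where sr: "poly_over K s" "poly_over K r" "p - monom c k * g = g * s + r"
        "r = 0 \<or> degree r < degree g"
      using less.hyps[of "p - monom c k * g"] by (metis mult_zero_right add_0 poly_over_0)
    show ?thesis
    proof (rule less.prems(1))
      show "p = g * (s + monom c k) + r" using sr(3) by (simp add: algebra_simps)
    qed (use sr c in \<open>auto intro: poly_over_add poly_over_monom\<close>)
  qed
qed

lemma poly_over_bezout:
  assumes p: "poly_over K p" "p \<noteq> 0" and g: "poly_over K g"
  obtains u v d sp sg where "poly_over K u" "poly_over K v" "poly_over K d" "d = u * p + v * g"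
    "poly_over K sp" "p = d * sp" "poly_over K sg" "g = d * sg"
proof -
  define I where "I = {u * p + v * g | u v. poly_over K u \<and> poly_over K v}"
  have pI: "p \<in> I" unfolding I_def using p(1)
    by (intro CollectI exI[of _ 1] exI[of _ 0]) (simp add: poly_over_1 poly_over_0)
  have gI: "g \<in> I" unfolding I_def
    by (intro CollectI exI[of _ 0] exI[of _ 1]) (simp add: poly_over_1 poly_over_0)
  obtain d where d: "d \<in> I" "d \<noteq> 0" and d_min: "\<And>f. f \<in> I \<Longrightarrow> f \<noteq> 0 \<Longrightarrow> degree d \<le> degree f"
    using ex_has_least_nat[of "\<lambda>d. d \<in> I \<and> d \<noteq> 0" p degree] pI p(2) by blast
  obtain u v where uv: "poly_over K u" "poly_over K v" "d = u * p + v * g"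
    using d(1) unfolding I_def by blast
  have d_over: "poly_over K d"
    using uv p g by (auto intro: poly_over_add poly_over_mult)
  have dvd: "\<exists>s. poly_over K s \<and> f = d * s" if "f \<in> I" for f
  proof -
    obtain u' v' where uv': "poly_over K u'" "poly_over K v'" "f = u' * p + v' * g"
      using \<open>f \<in> I\<close> unfolding I_def by blast
    then have "poly_over K f" using p g by (auto intro: poly_over_add poly_over_mult)
    then obtain s r where sr: "poly_over K s" "poly_over K r" "f = d * s + r"
        "r = 0 \<or> degree r < degree d"
      using poly_over_divmod[OF d_over d(2)] by blast
    have "r = (u' - u * s) * p + (v' - v * s) * g"
      using sr(3) uv(3) uv'(3) by (simp add: algebra_simps)
    then have "r \<in> I" unfolding I_def using uv uv' sr(1)
      by (blast intro: poly_over_diff poly_over_mult)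
    then have "r = 0" using sr(4) d_min by force
    then show ?thesis using sr by auto
  qed
  show ?thesis using that uv d_over dvd[OF pI] dvd[OF gI] by blast
qed

end


section \<open>Simple algebraic extensions and their norm\<close>

locale minimal_poly =
  fixes K :: "complex set" and \<alpha> :: complex and g :: "complex poly"
  assumes subfield: "is_subfield K" and poly_over_g: "poly_over K g" and monic: "lead_coeff g = 1"
    and root: "poly g \<alpha> = 0"
    and minimal: "\<And>h. poly_over K h \<Longrightarrow> h \<noteq> 0 \<Longrightarrow> poly h \<alpha> = 0 \<Longrightarrow> degree g \<le> degree h"

lemma minimal_poly_exists:
  assumes K: "is_subfield K" and p: "poly_over K p" "p \<noteq> 0" "poly p \<alpha> = 0"
  obtains g where "minimal_poly K \<alpha> g" "degree g \<le> degree p"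
proof -
  obtain h where h: "poly_over K h" "h \<noteq> 0" "poly h \<alpha> = 0"
    and h_min: "\<And>f. poly_over K f \<Longrightarrow> f \<noteq> 0 \<Longrightarrow> poly f \<alpha> = 0 \<Longrightarrow> degree h \<le> degree f"
    using ex_has_least_nat[of "\<lambda>h. poly_over K h \<and> h \<noteq> 0 \<and> poly h \<alpha> = 0" p degree] p by blast
  define g where "g = smult (inverse (lead_coeff h)) h"
  have "minimal_poly K \<alpha> g"
  proof unfold_locales
    show "poly_over K g"
      unfolding g_def using h(1)
      by (intro poly_over_smult[OF K] subfield_inverse[OF K]) (auto simp: poly_over_def)
  qed (use K h h_min in \<open>auto simp: g_def\<close>)
  moreover have "degree g \<le> degree p" using h_min[OF p] h(2) by (simp add: g_def)
  ultimately show ?thesis using that by blast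
qed

context minimal_poly
begin

definition simple_ext :: "complex set" where
  "simple_ext = {poly p \<alpha> | p. poly_over K p}"

lemma g_nonzero: "g \<noteq> 0"
  using monic by auto

lemma degree_pos: "0 < degree g"
proof (rule ccontr)
  assume "\<not> 0 < degree g"
  then have "g = [:1:]" using monic by (metis degree_eq_zeroE gr0I coeff_pCons_0)
  then show False using root by simp
qed

lemma simple_ext_poly: "poly_over K p \<Longrightarrow> poly p \<alpha> \<in> simple_ext"
  unfolding simple_ext_def by blast

lemma simple_extE:
  assumes "x \<in> simple_ext"
  obtains p where "poly_over K p" "x = poly p \<alpha>"
  using assms unfolding simple_ext_def by blast

lemma simple_ext_base: "c \<in> K \<Longrightarrow> c \<in> simple_ext"
  using simple_ext_poly[OF poly_over_const[OF subfield]] by fastforce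

lemma simple_ext_generator: "\<alpha> \<in> simple_ext"
  using simple_ext_poly[of "[:0, 1:]"] subfield
  by (simp add: poly_over_pCons_iff poly_over_1 subfield_zero flip: one_pCons)

lemma simple_ext_add: "x \<in> simple_ext \<Longrightarrow> y \<in> simple_ext \<Longrightarrow> x + y \<in> simple_ext"
  by (metis simple_extE simple_ext_poly poly_over_add[OF subfield] poly_add)

lemma simple_ext_mult: "x \<in> simple_ext \<Longrightarrow> y \<in> simple_ext \<Longrightarrow> x * y \<in> simple_ext"
  by (metis simple_extE simple_ext_poly poly_over_mult[OF subfield] poly_mult)

lemma simple_ext_uminus: "x \<in> simple_ext \<Longrightarrow> - x \<in> simple_ext"
  by (metis simple_extE simple_ext_poly poly_over_uminus[OF subfield] poly_minus)

lemma simple_ext_power: "x \<in> simple_ext \<Longrightarrow> x ^ n \<in> simple_ext"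
  by (induction n) (auto intro: simple_ext_mult simple_ext_base subfield_one[OF subfield])

lemma simple_ext_inverse:
  assumes "x \<in> simple_ext"
  shows "inverse x \<in> simple_ext"
proof (cases "x = 0")
  case True
  then show ?thesis using simple_ext_base[OF subfield_zero[OF subfield]] by simp
next
  case False
  obtain p where p: "poly_over K p" "x = poly p \<alpha>" using assms by (rule simple_extE)
  have "p \<noteq> 0" using p False by auto
  obtain u v d sp sg where uvd: "poly_over K u" "poly_over K v" "poly_over K d" "d = u * p + v * g"
    and "p = d * sp" and sg: "poly_over K sg" "g = d * sg"
    by (rule poly_over_bezout[OF subfield p(1) \<open>p \<noteq> 0\<close> poly_over_g])
  have d_root: "poly d \<alpha> \<noteq> 0" using \<open>p = d * sp\<close> p(2) False by auto
  then have "poly sg \<alpha> = 0" using root sg(2) by simp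
  moreover have "sg \<noteq> 0" "d \<noteq> 0" using sg(2) g_nonzero by auto
  ultimately have "degree d = 0"
    using minimal[OF sg(1)] sg(2) by (simp add: degree_mult_eq)
  then obtain c where c: "d = [:c:]" by (metis degree_eq_zeroE)
  have c_in: "c \<in> K" "c \<noteq> 0" using uvd(3) d_root c by (auto simp: poly_over_pCons_iff[OF subfield])
  have "c = poly d \<alpha>" using c by simp
  also have "\<dots> = poly u \<alpha> * x" using uvd(4) p(2) root by simp
  finally have "c = poly u \<alpha> * x" .
  then have "inverse x = poly (smult (inverse c) u) \<alpha>" using False c_in by (simp add: field_simps)
  then show ?thesis
    using simple_ext_poly[OF poly_over_smult[OF subfield subfield_inverse[OF subfield c_in(1)]
        uvd(1)]]
    by simp
qed

lemma is_subfield_simple_ext: "is_subfield simple_ext"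
  unfolding is_subfield_def
  by (intro conjI ballI impI simple_ext_base[OF subfield_zero[OF subfield]]
      simple_ext_base[OF subfield_one[OF subfield]]
      simple_ext_add simple_ext_mult simple_ext_uminus simple_ext_inverse)

lemma adjoin_subset_simple_ext: "adjoin K {\<alpha>} \<subseteq> simple_ext"
  by (rule adjoin_least[OF is_subfield_simple_ext])
    (auto intro: simple_ext_base simple_ext_generator)

lemma simple_ext_divide: "x \<in> simple_ext \<Longrightarrow> y \<in> simple_ext \<Longrightarrow> x / y \<in> simple_ext"
  by (rule subfield_divide[OF is_subfield_simple_ext])

lemma rep_unique:
  assumes "poly_over K r1" "poly_over K r2" "degree r1 < degree g" "degree r2 < degree g"
    and "poly r1 \<alpha> = poly r2 \<alpha>"
  shows "r1 = r2"
proof (rule ccontr)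
  assume "r1 \<noteq> r2"
  then have "degree g \<le> degree (r1 - r2)"
    using minimal[OF poly_over_diff[OF subfield assms(1,2)]] assms(5) by simp
  moreover have "degree (r1 - r2) < degree g" using assms(3,4) by (rule degree_diff_less)
  ultimately show False by simp
qed

definition rep :: "complex \<Rightarrow> complex poly" where
  "rep x = (THE r. poly_over K r \<and> degree r < degree g \<and> poly r \<alpha> = x)"

lemma rep:
  assumes "x \<in> simple_ext"
  shows "poly_over K (rep x)" "degree (rep x) < degree g" "poly (rep x) \<alpha> = x"
proof -
  obtain p where p: "poly_over K p" "x = poly p \<alpha>" using assms by (rule simple_extE)
  obtain s r where sr: "poly_over K s" "poly_over K r" "p = g * s + r" "r = 0 \<or> degree r < degree g"
    using poly_over_divmod[OF subfield poly_over_g g_nonzero p(1)] .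
  have "poly_over K r \<and> degree r < degree g \<and> poly r \<alpha> = x"
    using sr p(2) root degree_pos by auto
  then have "\<exists>!r. poly_over K r \<and> degree r < degree g \<and> poly r \<alpha> = x"
    using rep_unique by blast
  from theI'[OF this] show "poly_over K (rep x)" "degree (rep x) < degree g" "poly (rep x) \<alpha> = x"
    unfolding rep_def by auto
qed

lemma rep_poly:
  assumes "poly_over K r" "degree r < degree g"
  shows "rep (poly r \<alpha>) = r"
  using rep[OF simple_ext_poly[OF assms(1)]] assms by (intro rep_unique) auto

lemma minimal_poly_dvd:
  assumes "poly_over K p" "poly p \<alpha> = 0"
  shows "g dvd p"
proof -
  obtain s r where sr: "poly_over K s" "poly_over K r" "p = g * s + r" "r = 0 \<or> degree r < degree g"
    using poly_over_divmod[OF subfield poly_over_g g_nonzero assms(1)] .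
  have "poly r \<alpha> = 0" using sr(3) assms(2) root by simp
  then have "r = 0" using sr(2,4) rep_unique[OF sr(2) poly_over_0[OF subfield]] degree_pos by auto
  then show ?thesis using sr(3) by simp
qed

lemma eq_minimal_poly:
  assumes "poly_over K p" "lead_coeff p = 1" "poly p \<alpha> = 0" "degree p = degree g"
  shows "p = g"
proof (rule ccontr)
  assume "p \<noteq> g"
  then have "degree (p - g) < degree g"
    using assms(2,4) monic by (intro degree_less_if_less_eqI degree_diff_le) auto
  moreover have "degree g \<le> degree (p - g)"
    using minimal[OF poly_over_diff[OF subfield assms(1) poly_over_g]] \<open>p \<noteq> g\<close> root assms(3) by simp
  ultimately show False by simp
qed

text \<open>The norm from K(\<alpha>) to K is the determinant of multiplication by x on the K-basis
  1, \<alpha>, ..., \<alpha>^(degree g - 1); column j of the matrix holds the coordinates of x * \<alpha>^j.\<close>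

definition mult_matrix :: "complex \<Rightarrow> complex mat" where
  "mult_matrix x = mat (degree g) (degree g) (\<lambda>(i, j). coeff (rep (x * \<alpha> ^ j)) i)"

definition rel_norm :: "complex \<Rightarrow> complex" where
  "rel_norm x = det (mult_matrix x)"

lemma mult_matrix_carrier: "mult_matrix x \<in> carrier_mat (degree g) (degree g)"
  unfolding mult_matrix_def by simp

lemma rep_mult:
  assumes x: "x \<in> simple_ext" and y: "y \<in> simple_ext"
  shows "rep (x * y) = (\<Sum>k<degree g. smult (coeff (rep y) k) (rep (x * \<alpha> ^ k)))"
proof -
  have x_k: "x * \<alpha> ^ k \<in> simple_ext" for k
    using x by (intro simple_ext_mult simple_ext_power simple_ext_generator)
  let ?S = "\<Sum>k<degree g. smult (coeff (rep y) k) (rep (x * \<alpha> ^ k))"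
  have "poly_over K ?S"
    using rep(1)[OF y] rep(1)[OF x_k]
    by (intro poly_over_sum[OF subfield] poly_over_smult[OF subfield]) (auto simp: poly_over_def)
  moreover have "degree ?S < degree g"
    by (intro degree_sum_less degree_pos) (metis degree_smult_le le_less_trans rep(2)[OF x_k])
  moreover have "poly ?S \<alpha> = x * (\<Sum>k<degree g. coeff (rep y) k * \<alpha> ^ k)"
    by (simp add: poly_sum rep(3)[OF x_k] sum_distrib_left algebra_simps)
  moreover have "\<dots> = x * y"
    using poly_eq_sum_lessThan[OF rep(2)[OF y]] rep(3)[OF y] by simp
  ultimately show ?thesis using rep_poly by metis
qed

lemma mult_matrix_mult:
  assumes x: "x \<in> simple_ext" and y: "y \<in> simple_ext"
  shows "mult_matrix (x * y) = mult_matrix x * mult_matrix y"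
proof (rule eq_matI)
  fix i j
  assume "i < dim_row (mult_matrix x * mult_matrix y)" "j < dim_col (mult_matrix x * mult_matrix y)"
  then have i: "i < degree g" and j: "j < degree g" by (auto simp: mult_matrix_def)
  have y_j: "y * \<alpha> ^ j \<in> simple_ext" using y
    by (intro simple_ext_mult simple_ext_power simple_ext_generator)
  have "mult_matrix (x * y) $$ (i, j) = coeff (rep (x * (y * \<alpha> ^ j))) i"
    using i j by (simp add: mult_matrix_def mult.assoc)
  also have "\<dots> = (\<Sum>k<degree g. coeff (rep (y * \<alpha> ^ j)) k * coeff (rep (x * \<alpha> ^ k)) i)"
    by (simp add: rep_mult[OF x y_j] coeff_sum)
  also have "\<dots> = (mult_matrix x * mult_matrix y) $$ (i, j)"
    using i j
    by (auto simp: mult_matrix_def scalar_prod_def mult.commute lessThan_atLeast0 intro!: sum.cong)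
  finally show "mult_matrix (x * y) $$ (i, j) = (mult_matrix x * mult_matrix y) $$ (i, j)" .
qed (auto simp: mult_matrix_def)

lemma rel_norm_mult: "x \<in> simple_ext \<Longrightarrow> y \<in> simple_ext \<Longrightarrow> rel_norm (x * y) = rel_norm x * rel_norm y"
  unfolding rel_norm_def
  by (simp add: mult_matrix_mult det_mult[OF mult_matrix_carrier mult_matrix_carrier])

lemma rel_norm_in_base:
  assumes x: "x \<in> simple_ext"
  shows "rel_norm x \<in> K"
proof -
  have entry: "mult_matrix x $$ (i, j) \<in> K" if "i < degree g" "j < degree g" for i j
  proof -
    have "x * \<alpha> ^ j \<in> simple_ext" using x
      by (intro simple_ext_mult simple_ext_power simple_ext_generator)
    then show ?thesis using rep(1) that by (simp add: mult_matrix_def poly_over_def)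
  qed
  have "rel_norm x = (\<Sum>p \<in> {p. p permutes {0..<degree g}}.
      signof p * (\<Prod>i = 0..<degree g. mult_matrix x $$ (i, p i)))"
    unfolding rel_norm_def by (rule det_def'[OF mult_matrix_carrier])
  also have "\<dots> \<in> K"
    using subfield
    by (intro subfield_sum subfield_mult subfield_prod entry)
      (auto simp: sign_def permutes_in_image intro: subfield_one subfield_uminus)
  finally show ?thesis .
qed

lemma rel_norm_base:
  assumes c: "c \<in> K"
  shows "rel_norm c = c ^ degree g"
proof -
  have "rep (c * \<alpha> ^ j) = monom c j" if "j < degree g" for j
    using rep_poly[OF poly_over_monom[OF subfield c], of j] that degree_monom_le[of c j]
    by (simp add: poly_monom)
  then have "mult_matrix c = c \<cdot>\<^sub>m 1\<^sub>m (degree g)"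
    by (intro eq_matI) (auto simp: mult_matrix_def coeff_monom)
  then show ?thesis unfolding rel_norm_def by simp
qed

lemma rel_norm_power: "x \<in> simple_ext \<Longrightarrow> rel_norm (x ^ n) = rel_norm x ^ n"
  by (induction n)
    (simp_all add: rel_norm_base[OF subfield_one[OF subfield]] rel_norm_mult simple_ext_power)

end


section \<open>Roots of unity\<close>

lemma in_muI: "0 < n \<Longrightarrow> z ^ n = 1 \<Longrightarrow> z \<in> mu"
  unfolding mu_def by blast

lemma in_muE:
  assumes "z \<in> mu"
  obtains n where "0 < n" "z ^ n = 1"
  using assms unfolding mu_def by blast

lemma mu_nonzero: "z \<in> mu \<Longrightarrow> z \<noteq> 0"
  by (auto elim!: in_muE simp: power_0_left split: if_splits)

lemma power_power_commute: "(x ^ m) ^ n = (x ^ n) ^ m" for x :: "'a::monoid_mult"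
  by (metis power_mult mult.commute)

lemma mu_power:
  assumes "x \<in> mu"
  shows "x ^ k \<in> mu"
proof -
  obtain n where "0 < n" "x ^ n = 1" using assms by (rule in_muE)
  then show ?thesis by (metis in_muI power_power_commute power_one)
qed

lemma mu_mult:
  assumes "x \<in> mu" "y \<in> mu"
  shows "x * y \<in> mu"
proof -
  obtain n k where "0 < n" "x ^ n = 1" "0 < k" "y ^ k = 1" using assms by (meson in_muE)
  moreover have "(x * y) ^ (n * k) = (x ^ n) ^ k * (y ^ k) ^ n"
    by (simp add: power_mult_distrib mult.commute[of n k] flip: power_mult)
  ultimately show ?thesis by (intro in_muI[of "n * k"]) auto
qed

lemma mu_inverse:
  assumes "x \<in> mu"
  shows "inverse x \<in> mu"
proof -
  obtain n where "0 < n" "x ^ n = 1" using assms by (rule in_muE)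
  then show ?thesis by (intro in_muI[of n]) (simp_all add: power_inverse)
qed

lemma mu_power_int: "x \<in> mu \<Longrightarrow> x powi k \<in> mu"
  by (auto simp: power_int_def intro: mu_power mu_inverse)

lemma root_of_unity_power_eq_1_iff:
  fixes w :: complex
  assumes q: "prime q" and w: "w ^ q = 1" "w \<noteq> 1"
  shows "w ^ k = 1 \<longleftrightarrow> q dvd k"
proof
  assume k: "w ^ k = 1"
  show "q dvd k"
  proof (rule ccontr)
    assume "\<not> q dvd k"
    then have "k \<noteq> 0" "gcd k q = 1"
      using prime_imp_coprime[OF q] by (metis dvd_0_right, simp add: coprime_commute)
    then obtain x y where xy: "k * x = q * y + 1" using bezout_nat[of k q] by auto
    have "w = w ^ (k * x)" unfolding xy by (simp add: power_mult w(1))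
    also have "\<dots> = 1" using k by (simp add: power_mult)
    finally show False using w(2) by simp
  qed
qed (auto simp: power_mult w(1))

lemma degree_monom_minus_const:
  assumes "0 < n"
  shows "degree (monom (1::complex) n - [:c:]) = n"
proof -
  have "monom (1::complex) n - [:c:] = monom 1 n + [:- c:]"
    by (simp add: poly_eq_iff coeff_pCons split: nat.split)
  also have "degree \<dots> = n"
    using assms by (subst degree_add_eq_left) (simp_all add: degree_monom_eq)
  finally show ?thesis .
qed

text \<open>The q distinct powers of w exhaust the at most q roots of X^q - 1.\<close>

lemma root_of_unity_prime_generates:
  fixes w z :: complex
  assumes q: "prime q" and w: "w ^ q = 1" "w \<noteq> 1" and z: "z ^ q = 1"
  obtains s where "z = w ^ s"
proof -
  have "0 < q" using q by (simp add: prime_gt_0_nat)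
  have "w \<noteq> 0" using w \<open>0 < q\<close> by (auto simp: power_0_left)
  have "w ^ i \<noteq> w ^ j" if "i < j" "j < q" for i j
  proof
    assume "w ^ i = w ^ j"
    then have "w ^ (j - i) = 1" using \<open>w \<noteq> 0\<close> that by (simp add: power_diff)
    then show False using root_of_unity_power_eq_1_iff[OF q w] that by (auto dest: dvd_imp_le)
  qed
  then have card_powers: "card ((\<lambda>s. w ^ s) ` {..<q}) = q"
    by (subst card_image) (auto intro: linorder_inj_onI')
  define p where "p = monom (1::complex) q - [:1:]"
  have "degree p = q" "p \<noteq> 0"
    using degree_monom_minus_const[OF \<open>0 < q\<close>] \<open>0 < q\<close> by (auto simp: p_def)
  have roots: "(\<lambda>s. w ^ s) ` {..<q} \<union> {z} \<subseteq> {x. poly p x = 0}"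
    using w z by (auto simp: p_def poly_monom) (metis power_power_commute power_one)
  then have "card ((\<lambda>s. w ^ s) ` {..<q} \<union> {z}) \<le> q"
    using card_mono[OF poly_roots_finite[OF \<open>p \<noteq> 0\<close>] roots]
      card_poly_roots_bound[OF \<open>p \<noteq> 0\<close>] \<open>degree p = q\<close> by linarith
  then have "z \<in> (\<lambda>s. w ^ s) ` {..<q}"
    using card_powers card_insert_disjoint[of "(\<lambda>s. w ^ s) ` {..<q}" z] by fastforce
  then show ?thesis using that by blast
qed

lemma root_of_unity_minimal_poly:
  assumes F: "is_subfield F" and q: "prime q" and w: "w ^ q = 1" "w \<noteq> 1"
  obtains g where "minimal_poly F w g" "degree g < q"
proof -
  define p :: "complex poly" where "p = (\<Sum>k<q. monom 1 k)"
  have "poly p w = (\<Sum>k<q. w ^ k)" unfolding p_def by (simp add: poly_sum poly_monom)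
  also have "\<dots> = 0" using w by (simp add: geometric_sum)
  finally have "poly p w = 0" .
  moreover have "poly_over F p"
    unfolding p_def by (intro poly_over_sum[OF F] poly_over_monom[OF F] subfield_one[OF F])
  moreover have "coeff p 0 = 1"
    using prime_gt_0_nat[OF q] by (simp add: p_def coeff_sum lessThan_Suc_eq_insert_0 sum.reindex)
  moreover have "degree p < q"
  proof -
    have "degree p \<le> q - 1"
      unfolding p_def by (rule degree_sum_le) (auto intro: order.trans[OF degree_monom_le])
    then show ?thesis using prime_gt_1_nat[OF q] by simp
  qed
  ultimately show ?thesis
    by (metis that minimal_poly_exists[OF F] le_less_trans one_neq_zero coeff_0)
qed

lemma root_of_unity_of_order_prime_power:
  assumes "root_of_unity_of_order (q ^ t) \<zeta>" "1 \<le> t" "1 < q"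
  shows "\<zeta> \<in> mu" "(\<zeta> ^ (q ^ (t - 1))) ^ q = 1" "\<zeta> ^ (q ^ (t - 1)) \<noteq> 1"
proof -
  have \<zeta>: "\<zeta> ^ (q ^ t) = 1" "\<And>m. 0 < m \<Longrightarrow> m < q ^ t \<Longrightarrow> \<zeta> ^ m \<noteq> 1"
    using assms(1) unfolding root_of_unity_of_order_def by auto
  show "\<zeta> \<in> mu" using \<zeta>(1) assms(3) by (intro in_muI[of "q ^ t"]) auto
  have "q ^ t = q ^ (t - 1) * q" using assms(2) by (cases t) auto
  then show "(\<zeta> ^ (q ^ (t - 1))) ^ q = 1" "\<zeta> ^ (q ^ (t - 1)) \<noteq> 1"
    using \<zeta> assms(3) by (simp_all add: power_mult[symmetric])
qed

lemma root_of_unity_split_prime_part: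
  fixes \<eta> :: complex
  assumes q: "prime q" and \<eta>: "\<eta> \<in> mu"
  obtains i j e where "\<eta> = (\<eta> ^ i) ^ q * inverse (\<eta> ^ j)" "inverse (\<eta> ^ j) ^ (q ^ e) = 1"
proof -
  obtain n where n: "0 < n" "\<eta> ^ n = 1" using \<eta> by (rule in_muE)
  have "n \<noteq> 0" "\<not> is_unit q" using n(1) q by (auto simp: not_prime_unit)
  then obtain n' where n': "n = q ^ multiplicity q n * n'" "\<not> q dvd n'"
    by (rule multiplicity_decompose')
  have "gcd q n' = 1" using prime_imp_coprime[OF q n'(2)] by simp
  then obtain i j where ij: "q * i = n' * j + 1"
    using bezout_nat[of q n'] prime_gt_0_nat[OF q] by auto
  have "(\<eta> ^ i) ^ q = \<eta> * \<eta> ^ (n' * j)"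
    by (metis ij power_mult mult.commute power_Suc Suc_eq_plus1)
  moreover have "(\<eta> ^ (n' * j)) ^ (q ^ multiplicity q n) = (\<eta> ^ n) ^ j"
    by (subst (2) n'(1)) (simp only: power_mult[symmetric] mult_ac)
  ultimately show ?thesis
    using that[of i "n' * j" "multiplicity q n"] mu_nonzero[OF \<eta>] n(2)
    by (simp add: field_simps power_inverse)
qed


section \<open>Simplicity\<close>

lemma k_simple_prime_iff:
  assumes L: "is_subfield L" and q: "prime q"
  shows "k_simple L q a \<longleftrightarrow>
    a \<in> L \<and> a \<noteq> 0 \<and> a \<notin> mu \<and> (\<forall>c\<in>L. \<forall>\<eta>\<in>mu. a \<noteq> c ^ q * \<eta>)"
proof
  assume "k_simple L q a"
  then have "a \<in> L \<and> a \<noteq> 0 \<and> a \<notin> mu" and dvd: "\<And>c \<eta>. c \<in> L \<Longrightarrow> \<eta> \<in> mu \<Longrightarrow>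
      a powi 1 = c ^ q * \<eta> \<Longrightarrow> int q dvd 1"
    unfolding k_simple_def by blast+
  moreover have "\<not> int q dvd 1" using prime_gt_1_nat[OF q] by simp
  ultimately show "a \<in> L \<and> a \<noteq> 0 \<and> a \<notin> mu \<and> (\<forall>c\<in>L. \<forall>\<eta>\<in>mu. a \<noteq> c ^ q * \<eta>)"
    by auto
next
  assume "a \<in> L \<and> a \<noteq> 0 \<and> a \<notin> mu \<and> (\<forall>c\<in>L. \<forall>\<eta>\<in>mu. a \<noteq> c ^ q * \<eta>)"
  then have a: "a \<in> L" "a \<noteq> 0" "a \<notin> mu"
    and no_root: "\<And>c \<eta>. c \<in> L \<Longrightarrow> \<eta> \<in> mu \<Longrightarrow> a \<noteq> c ^ q * \<eta>" by blast+
  have "int q dvd d" if b: "b \<in> L" and \<epsilon>: "\<epsilon> \<in> mu" and eq: "a powi d = b ^ q * \<epsilon>" for b \<epsilon> d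
  proof (rule ccontr)
    assume "\<not> int q dvd d"
    then have "coprime (int q) d" using q by (simp add: prime_imp_coprime prime_nat_int_transfer)
    then obtain u v where uv: "u * d + v * int q = 1" using bezout_int[of d "int q"]
      by (auto simp: coprime_commute)
    have "a = a powi (d * u + v * int q)" using uv by (simp add: mult.commute)
    also have "\<dots> = (a powi d) powi u * (a powi v) ^ q"
      by (simp only: power_int_add[OF disjI1[OF a(2)]] power_int_mult power_int_power')
    also have "(a powi d) powi u = (b powi u) ^ q * \<epsilon> powi u"
      unfolding eq power_int_mult_distrib power_int_power power_int_power'
      by (simp add: mult.commute)
    finally have "a = (b powi u * a powi v) ^ q * \<epsilon> powi u"
      by (simp add: power_mult_distrib mult_ac)
    then show False
      using no_root L b a(1) mu_power_int[OF \<epsilon>] by (meson subfield_mult subfield_power_int)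
  qed
  then show "k_simple L q a" using a unfolding k_simple_def by blast
qed

lemma k_simple_subset: "k_simple L q a \<Longrightarrow> K \<subseteq> L \<Longrightarrow> a \<in> K \<Longrightarrow> k_simple K q a"
  unfolding k_simple_def by blast

lemma k_simple_adjoin_mono:
  assumes "k_simple (adjoin L S) q a" "K \<subseteq> L" "a \<in> K"
  shows "k_simple (adjoin K S) q a"
proof (rule k_simple_subset[OF assms(1)])
  show "adjoin K S \<subseteq> adjoin L S" by (rule adjoin_mono[OF assms(2)])
  show "a \<in> adjoin K S" using assms(3) subset_adjoin by blast
qed

lemma k_simple_extend:
  assumes L: "is_subfield L" and q: "prime q" and a: "k_simple K q a" and "K \<subseteq> L"
    and no_root: "\<And>c \<eta>. c \<in> L \<Longrightarrow> \<eta> \<in> mu \<Longrightarrow> a \<noteq> c ^ q * \<eta>"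
  shows "k_simple L q a"
proof -
  have "a \<in> K" "a \<noteq> 0" "a \<notin> mu" using a unfolding k_simple_def by auto
  then show ?thesis using \<open>K \<subseteq> L\<close> no_root by (subst k_simple_prime_iff[OF L q]) blast
qed

lemma (in minimal_poly) k_simple_adjoin_not_dvd_degree:
  assumes q: "prime q" and a: "k_simple K q a" and "\<not> q dvd degree g"
  shows "k_simple (adjoin K {\<alpha>}) q a"
proof (rule k_simple_extend[OF is_subfield_adjoin q a subset_adjoin])
  fix c \<eta> assume c: "c \<in> adjoin K {\<alpha>}" and \<eta>: "\<eta> \<in> mu"
  have a_in: "a \<in> K" "a \<noteq> 0" using a unfolding k_simple_def by auto
  show "a \<noteq> c ^ q * \<eta>"
  proof
    assume eq: "a = c ^ q * \<eta>"
    have c_in: "c \<in> simple_ext" using c adjoin_subset_simple_ext by blast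
    have "c \<noteq> 0" using eq a_in(2) prime_gt_0_nat[OF q] by auto
    then have "\<eta> = a / c ^ q" using eq by simp
    then have \<eta>_in: "\<eta> \<in> simple_ext"
      using a_in(1) c_in by (simp add: simple_ext_divide simple_ext_power simple_ext_base)
    obtain n where "0 < n" "\<eta> ^ n = 1" using \<eta> by (rule in_muE)
    then have "rel_norm \<eta> \<in> mu"
      using rel_norm_power[OF \<eta>_in, of n] rel_norm_base[OF subfield_one[OF subfield]]
      by (auto intro: in_muI)
    moreover have "a powi int (degree g) = rel_norm c ^ q * rel_norm \<eta>"
      using eq rel_norm_base[OF a_in(1)] rel_norm_mult[OF simple_ext_power[OF c_in] \<eta>_in]
        rel_norm_power[OF c_in] by (simp add: power_int_of_nat)
    ultimately have "int q dvd int (degree g)"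
      using a rel_norm_in_base[OF c_in] unfolding k_simple_def by blast
    then show False using \<open>\<not> q dvd degree g\<close> by simp
  qed
qed

lemma k_simple_adjoin_root_of_unity:
  assumes F: "is_subfield F" and q: "prime q" and a: "k_simple F q a" and w: "w ^ q = 1"
  shows "k_simple (adjoin F {w}) q a"
proof (cases "w \<in> F")
  case True
  then show ?thesis using a by (simp add: adjoin_subfield_eq[OF F])
next
  case False
  then have "w \<noteq> 1" using subfield_one[OF F] by auto
  then obtain g where g: "minimal_poly F w g" "degree g < q"
    using root_of_unity_minimal_poly[OF F q w] by blast
  then have "\<not> q dvd degree g" using minimal_poly.degree_pos[OF g(1)] by (auto dest: dvd_imp_le)
  then show ?thesis by (rule minimal_poly.k_simple_adjoin_not_dvd_degree[OF g(1) q a])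
qed


section \<open>Kummer extensions of prime degree\<close>

lemma coprime_powers_in_subfield:
  assumes F: "is_subfield F" and x: "x ^ m \<in> F" "x ^ n \<in> F" and "coprime m n"
  shows "x \<in> F"
proof (cases "x = 0 \<or> m = 0")
  case True
  then show ?thesis using assms subfield_zero[OF F] by auto
next
  case False
  then obtain i j where ij: "m * i = n * j + 1" using bezout_nat[of m n] \<open>coprime m n\<close> by auto
  have "(x ^ m) ^ i = (x ^ n) ^ j * x"
    by (metis ij power_mult power_Suc2 Suc_eq_plus1)
  then have "x = (x ^ m) ^ i / (x ^ n) ^ j" using False by simp
  then show ?thesis using F x by (metis subfield_divide subfield_power)
qed

locale kummer_ext =
  fixes F :: "complex set" and q :: nat and w \<omega> :: complex
  assumes subfield: "is_subfield F" and prime: "prime q"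
    and w_in: "w \<in> F" and w_pow: "w ^ q = 1" and w_ne_1: "w \<noteq> 1"
    and \<omega>_pow_in: "\<omega> ^ q \<in> F" and \<omega>_notin: "\<omega> \<notin> F"
    and i_in: "q = 2 \<Longrightarrow> \<i> \<in> F"
begin

lemma q_pos: "0 < q"
  using prime by (simp add: prime_gt_0_nat)

lemma \<omega>_nonzero: "\<omega> \<noteq> 0"
  using \<omega>_notin subfield_zero[OF subfield] by auto

lemma w_nonzero: "w \<noteq> 0"
  using w_pow q_pos by (auto simp: power_0_left)

lemma w_power_in: "w ^ k \<in> F"
  by (rule subfield_power[OF subfield w_in])

text \<open>If \<omega> had a minimal polynomial of degree m < q, then N(\<omega>)^q = N(\<omega>^q) = (\<omega>^m)^q
  would make \<omega>^m a root of unity times N(\<omega>), hence an element of F, and with \<omega>^q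
  this would force \<omega> into F.\<close>

lemma degree_minimal_poly_radical:
  assumes g: "minimal_poly F \<omega> g" "degree g \<le> q"
  shows "degree g = q"
proof (rule ccontr)
  interpret g: minimal_poly F \<omega> g by (rule g(1))
  assume "degree g \<noteq> q"
  then have "\<not> q dvd degree g" using g(2) g.degree_pos by (auto dest: dvd_imp_le)
  have "g.rel_norm \<omega> ^ q = (\<omega> ^ degree g) ^ q"
    using g.rel_norm_power[OF g.simple_ext_generator, of q] g.rel_norm_base[OF \<omega>_pow_in]
    by (simp add: power_power_commute[of \<omega> q])
  then have "(g.rel_norm \<omega> / \<omega> ^ degree g) ^ q = 1"
    using \<omega>_nonzero by (simp add: power_divide)
  then obtain s where "g.rel_norm \<omega> / \<omega> ^ degree g = w ^ s"
    using root_of_unity_prime_generates[OF prime w_pow w_ne_1] by metis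
  then have "\<omega> ^ degree g = g.rel_norm \<omega> / w ^ s" using \<omega>_nonzero w_nonzero
    by (simp add: field_simps)
  then have "\<omega> ^ degree g \<in> F"
    using g.rel_norm_in_base[OF g.simple_ext_generator] subfield_divide[OF subfield] w_power_in
    by simp
  moreover have "coprime (degree g) q"
    using prime_imp_coprime[OF prime \<open>\<not> q dvd degree g\<close>] by (simp add: coprime_commute)
  ultimately show False using coprime_powers_in_subfield[OF subfield] \<omega>_pow_in \<omega>_notin by blast
qed

lemma minimal_poly_radical: "minimal_poly F \<omega> (monom 1 q - [:\<omega> ^ q:])"
proof -
  define p where "p = monom (1::complex) q - [:\<omega> ^ q:]"
  have p: "poly_over F p" "degree p = q" "poly p \<omega> = 0"
    unfolding p_def using degree_monom_minus_const[OF q_pos] subfield \<omega>_pow_in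
    by (auto simp: poly_monom intro!: poly_over_diff poly_over_monom poly_over_const subfield_one)
  have "lead_coeff p = 1" unfolding p(2) unfolding p_def using q_pos
    by (simp add: coeff_pCons split: nat.split)
  have "p \<noteq> 0" using p(2) q_pos by auto
  then obtain g where g: "minimal_poly F \<omega> g" "degree g \<le> q"
    using minimal_poly_exists[OF subfield p(1) _ p(3)] p(2) by metis
  have "p = g"
    using minimal_poly.eq_minimal_poly[OF g(1) p(1) \<open>lead_coeff p = 1\<close> p(3)]
      degree_minimal_poly_radical[OF g] p(2) by simp
  then show ?thesis using g(1) by (simp add: p_def)
qed

sublocale minimal_poly F \<omega> "monom 1 q - [:\<omega> ^ q:]"
  by (rule minimal_poly_radical)

lemma degree_radical_poly: "degree (monom 1 q - [:\<omega> ^ q:]) = q"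
  by (rule degree_monom_minus_const[OF q_pos])

text \<open>sigma j is the automorphism of F(\<omega>) over F sending \<omega> to w^j \<omega>; outside of
  simple_ext its values are meaningless.\<close>

definition sigma :: "nat \<Rightarrow> complex \<Rightarrow> complex" where
  "sigma j x = poly (rep x) (w ^ j * \<omega>)"

lemma poly_root_conjugate:
  assumes "poly_over F p" "poly p \<omega> = 0"
  shows "poly p (w ^ j * \<omega>) = 0"
proof -
  have "(w ^ j * \<omega>) ^ q = \<omega> ^ q"
    by (simp add: power_mult_distrib power_power_commute[of w j] w_pow)
  then show ?thesis using minimal_poly_dvd[OF assms] by (auto simp: poly_monom)
qed

lemma sigma_poly:
  assumes "poly_over F p"
  shows "sigma j (poly p \<omega>) = poly p (w ^ j * \<omega>)"
proof -
  have x: "poly p \<omega> \<in> simple_ext" by (rule simple_ext_poly[OF assms])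
  have "poly (p - rep (poly p \<omega>)) \<omega> = 0" using rep(3)[OF x] by simp
  from poly_root_conjugate[OF poly_over_diff[OF subfield assms rep(1)[OF x]] this, of j]
  show ?thesis unfolding sigma_def by simp
qed

lemma sigma_mult:
  assumes "x \<in> simple_ext" "y \<in> simple_ext"
  shows "sigma j (x * y) = sigma j x * sigma j y"
  using sigma_poly[OF poly_over_mult[OF subfield rep(1)[OF assms(1)] rep(1)[OF assms(2)]], of j]
  by (simp add: rep(3)[OF assms(1)] rep(3)[OF assms(2)] sigma_def)

lemma sigma_base: "c \<in> F \<Longrightarrow> sigma j c = c"
  using sigma_poly[OF poly_over_const[OF subfield], of c j] by simp

lemma sigma_generator: "sigma j \<omega> = w ^ j * \<omega>"
  using sigma_poly[of "[:0, 1:]" j] subfield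
  by (simp add: poly_over_pCons_iff poly_over_1 subfield_zero flip: one_pCons)

lemma sigma_pcompose:
  assumes "x \<in> simple_ext"
  shows "sigma j x = poly (pcompose (rep x) [:0, w ^ j:]) \<omega>"
  unfolding sigma_def by (simp add: poly_pcompose mult.commute)

lemma poly_over_scale: "poly_over F [:0, w ^ j:]"
  using subfield w_power_in by (simp add: poly_over_pCons_iff poly_over_0 subfield_zero)

lemma sigma_in: "x \<in> simple_ext \<Longrightarrow> sigma j x \<in> simple_ext"
  unfolding sigma_pcompose
  by (intro simple_ext_poly poly_over_pcompose[OF subfield rep(1) poly_over_scale])

lemma sigma_sigma:
  assumes "x \<in> simple_ext"
  shows "sigma j (sigma k x) = sigma (j + k) x"
proof -
  have "sigma j (sigma k x) = poly (pcompose (rep x) [:0, w ^ k:]) (w ^ j * \<omega>)"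
    unfolding sigma_pcompose[OF assms]
    by (rule sigma_poly[OF poly_over_pcompose[OF subfield rep(1)[OF assms] poly_over_scale]])
  then show ?thesis unfolding sigma_def by (simp add: poly_pcompose power_add algebra_simps)
qed

lemma sigma_0: "x \<in> simple_ext \<Longrightarrow> sigma 0 x = x"
  unfolding sigma_def using rep(3) by simp

lemma sigma_period: "x \<in> simple_ext \<Longrightarrow> sigma q x = x"
  unfolding sigma_def using rep(3) w_pow by simp

lemma sigma_power: "x \<in> simple_ext \<Longrightarrow> sigma j (x ^ n) = sigma j x ^ n"
  by (induction n)
    (simp_all add: sigma_base[OF subfield_one[OF subfield]] sigma_mult simple_ext_power)

lemma sigma_inverse:
  assumes "x \<in> simple_ext" "x \<noteq> 0"
  shows "sigma j (inverse x) = inverse (sigma j x)" "sigma j x \<noteq> 0"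
proof -
  have "sigma j x * sigma j (inverse x) = 1"
    using sigma_mult[OF assms(1) simple_ext_inverse[OF assms(1)]]
      sigma_base[OF subfield_one[OF subfield]]
      assms(2) by simp
  then show "sigma j (inverse x) = inverse (sigma j x)" "sigma j x \<noteq> 0"
    using inverse_unique[of "sigma j x" "sigma j (inverse x)"] by auto
qed

lemma sigma_divide:
  assumes "x \<in> simple_ext" "y \<in> simple_ext" "y \<noteq> 0"
  shows "sigma j (x / y) = sigma j x / sigma j y"
  using sigma_mult[OF assms(1) simple_ext_inverse[OF assms(2)]] sigma_inverse[OF assms(2,3)]
  by (simp add: divide_inverse)

lemma sigma_eigenvector:
  assumes x: "x \<in> simple_ext" and c: "c \<in> F" and eigen: "sigma 1 x = c * x"
  shows "sigma j x = c ^ j * x"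
proof (induction j)
  case 0
  then show ?case using sigma_0[OF x] by simp
next
  case (Suc j)
  have "sigma (Suc j) x = sigma j (c * x)" using sigma_sigma[OF x, of j 1] eigen by simp
  also have "\<dots> = c ^ Suc j * x"
    using sigma_mult[OF simple_ext_base[OF c] x] sigma_base[OF c] Suc by simp
  finally show ?case .
qed

text \<open>The trace kills every \<omega>^i with 0 < i < q, since the w^i are nontrivial q-th roots
  of unity.\<close>

lemma sum_sigma:
  assumes x: "x \<in> simple_ext"
  shows "(\<Sum>j<q. sigma j x) = of_nat q * coeff (rep x) 0"
proof -
  let ?r = "rep x"
  have "(\<Sum>j<q. sigma j x) = (\<Sum>j<q. \<Sum>i<q. coeff ?r i * \<omega> ^ i * (w ^ i) ^ j)"
    unfolding sigma_def poly_eq_sum_lessThan[OF rep(2)[OF x, unfolded degree_radical_poly]]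
    by (simp add: power_mult_distrib power_power_commute[of w] mult_ac)
  also have "\<dots> = (\<Sum>i<q. coeff ?r i * \<omega> ^ i * (\<Sum>j<q. (w ^ i) ^ j))"
    by (subst sum.swap) (simp only: sum_distrib_left)
  also have "\<dots> = (\<Sum>i\<in>{0}. coeff ?r i * \<omega> ^ i * (\<Sum>j<q. (w ^ i) ^ j))"
  proof (rule sum.mono_neutral_right)
    show "\<forall>i\<in>{..<q} - {0}. coeff ?r i * \<omega> ^ i * (\<Sum>j<q. (w ^ i) ^ j) = 0"
    proof
      fix i assume i: "i \<in> {..<q} - {0}"
      have "w ^ i \<noteq> 1" using i root_of_unity_power_eq_1_iff[OF prime w_pow w_ne_1, of i]
        by (auto dest: dvd_imp_le)
      moreover have "(w ^ i) ^ q = 1" by (simp add: power_power_commute[of w i] w_pow)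
      ultimately show "coeff ?r i * \<omega> ^ i * (\<Sum>j<q. (w ^ i) ^ j) = 0" by (simp add: geometric_sum)
    qed
  qed (use q_pos in auto)
  finally show ?thesis by simp
qed

lemma sigma_fixed_in_base:
  assumes x: "x \<in> simple_ext" and fixed: "sigma 1 x = x"
  shows "x \<in> F"
proof -
  have "sigma j x = x" for j
    using sigma_eigenvector[OF x subfield_one[OF subfield]] fixed by simp
  then have "of_nat q * x = of_nat q * coeff (rep x) 0" using sum_sigma[OF x] by simp
  then have "x = coeff (rep x) 0" using q_pos by simp
  then show ?thesis using rep(1)[OF x] unfolding poly_over_def by metis
qed

lemma power_complement: "x ^ s * x ^ ((q - 1) * s) = (x ^ q) ^ s" for x :: complex
proof -
  have "s + (q - 1) * s = q * s" using q_pos by (cases q) auto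
  then show ?thesis by (metis power_add power_mult)
qed

lemma power_in_base_imp_monomial:
  assumes E: "E \<in> simple_ext" and E_pow: "E ^ q \<in> F"
  shows "\<exists>h\<in>F. \<exists>s. E = h * \<omega> ^ s"
proof (cases "E = 0")
  case True
  then show ?thesis using subfield_zero[OF subfield] by auto
next
  case False
  have "sigma 1 E ^ q = E ^ q" using sigma_power[OF E, of 1 q] sigma_base[OF E_pow, of 1] by simp
  then have "(sigma 1 E / E) ^ q = 1" using False by (simp add: power_divide)
  then obtain s where "sigma 1 E / E = w ^ s"
    using root_of_unity_prime_generates[OF prime w_pow w_ne_1] by metis
  then have sigma_E: "sigma 1 E = w ^ s * E" using False by (simp add: field_simps)
  define Y where "Y = E * \<omega> ^ ((q - 1) * s)"
  have Y_in: "Y \<in> simple_ext" unfolding Y_def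
    by (intro simple_ext_mult E simple_ext_power simple_ext_generator)
  have "sigma 1 Y = w ^ s * E * (w * \<omega>) ^ ((q - 1) * s)"
    unfolding Y_def using sigma_E sigma_generator[of 1]
    by (simp add: sigma_mult[OF E simple_ext_power[OF simple_ext_generator]]
        sigma_power[OF simple_ext_generator])
  also have "\<dots> = (w ^ s * w ^ ((q - 1) * s)) * Y"
    unfolding Y_def by (simp add: power_mult_distrib mult_ac)
  also have "\<dots> = Y" unfolding power_complement w_pow by simp
  finally have "Y \<in> F" by (rule sigma_fixed_in_base[OF Y_in])
  have "Y * \<omega> ^ s = E * (\<omega> ^ q) ^ s"
    unfolding Y_def by (simp add: mult.assoc power_complement flip: power_complement[of \<omega> s])
  then have "E = Y / (\<omega> ^ q) ^ s * \<omega> ^ s" using \<omega>_nonzero by (simp add: field_simps)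
  then show ?thesis
    using subfield_divide[OF subfield \<open>Y \<in> F\<close> subfield_power[OF subfield \<omega>_pow_in]] by blast
qed

lemma prod_sigma_quotient:
  assumes E: "E \<in> simple_ext" "E \<noteq> 0"
  shows "(\<Prod>j<q. sigma j (sigma 1 E / E)) = 1"
proof -
  have "(\<Prod>j<n. sigma j (sigma 1 E / E)) = sigma n E / E" for n
  proof (induction n)
    case 0
    then show ?case using sigma_0[OF E(1)] E(2) by simp
  next
    case (Suc n)
    have "sigma n (sigma 1 E / E) = sigma (Suc n) E / sigma n E"
      using sigma_divide[OF sigma_in[OF E(1)] E] sigma_sigma[OF E(1), of n 1] by simp
    then show ?case using Suc sigma_inverse(2)[OF E, of n] by simp
  qed
  from this[of q] show ?thesis using sigma_period[OF E(1)] E(2) by simp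
qed

lemma prod_sigma_odd:
  assumes \<nu>: "\<nu> \<in> simple_ext" "\<nu> \<noteq> 0" "\<nu> ^ q \<in> F" and "odd q"
  shows "(\<Prod>j<q. sigma j \<nu>) = \<nu> ^ q"
proof -
  obtain k where k: "q = 2 * k + 1" using \<open>odd q\<close> by (rule oddE)
  have sum: "(\<Sum>j<q. j) = q * k" by (simp add: k lessThan_atLeast0 Sum_Ico_nat)
  have "sigma 1 \<nu> ^ q = \<nu> ^ q"
    using sigma_power[OF \<nu>(1), of 1 q] sigma_base[OF \<nu>(3)] by simp
  then have "(sigma 1 \<nu> / \<nu>) ^ q = 1" using \<nu>(2) by (simp add: power_divide)
  then obtain s where "sigma 1 \<nu> / \<nu> = w ^ s"
    using root_of_unity_prime_generates[OF prime w_pow w_ne_1] by metis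
  then have "sigma j \<nu> = (w ^ s) ^ j * \<nu>" for j
    using \<nu>(2) by (intro sigma_eigenvector[OF \<nu>(1) w_power_in]) (simp add: field_simps)
  then have "(\<Prod>j<q. sigma j \<nu>) = (\<Prod>j<q. w ^ (s * j)) * \<nu> ^ q"
    by (simp add: prod.distrib power_mult)
  also have "(\<Prod>j<q. w ^ (s * j)) = w ^ (s * (\<Sum>j<q. j))"
    by (simp add: power_sum sum_distrib_left)
  also have "\<dots> = (w ^ q) ^ (s * k)"
    unfolding sum by (simp only: power_mult[symmetric] mult_ac)
  finally show ?thesis using w_pow by simp
qed

lemma sigma_quotient_power:
  assumes E: "E \<in> simple_ext" "E \<noteq> 0" and f: "f \<in> F" and eq: "E ^ q = f * \<omega> ^ r"
  shows "(sigma 1 E / E) ^ q = w ^ r"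
proof -
  have "f \<noteq> 0" using eq E(2) by auto
  have "sigma 1 E ^ q = f * (w * \<omega>) ^ r"
    using sigma_power[OF E(1), of 1 q] sigma_base[OF f] sigma_generator[of 1]
    by (simp add: eq sigma_mult[OF simple_ext_base[OF f] simple_ext_power[OF simple_ext_generator]]
        sigma_power[OF simple_ext_generator])
  then show ?thesis
    unfolding power_divide eq using \<open>f \<noteq> 0\<close> \<omega>_nonzero by (simp add: power_mult_distrib)
qed

lemma dvd_exponent_if_power_eq:
  assumes E: "E \<in> simple_ext" "E \<noteq> 0" and f: "f \<in> F" and eq: "E ^ q = f * \<omega> ^ r"
  shows "q dvd r"
proof -
  define \<nu> where "\<nu> = sigma 1 E / E"
  have \<nu>: "\<nu> \<in> simple_ext" "\<nu> \<noteq> 0"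
    unfolding \<nu>_def using sigma_inverse(2)[OF E] E by (auto intro: simple_ext_divide sigma_in)
  have \<nu>_pow: "\<nu> ^ q = w ^ r" unfolding \<nu>_def by (rule sigma_quotient_power[OF E f eq])
  have norm: "(\<Prod>j<q. sigma j \<nu>) = 1" unfolding \<nu>_def by (rule prod_sigma_quotient[OF E])
  show "q dvd r"
  proof (cases "q = 2")
    case True
    text \<open>For odd r, \<nu>^2 = w^r = -1 puts \<nu> = \<plusminus>i into F, so its norm is \<nu>^2 rather than 1.\<close>
    have "(w - 1) * (w + 1) = 0" using w_pow True by (simp add: algebra_simps power2_eq_square)
    then have "w = -1" using w_ne_1 by (simp add: eq_neg_iff_add_eq_0)
    show ?thesis
    proof (rule ccontr)
      assume "\<not> q dvd r"
      then have "\<nu> ^ 2 = -1" using \<nu>_pow True \<open>w = -1\<close> by simp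
      then have "(\<nu> - \<i>) * (\<nu> + \<i>) = 0" by (simp add: algebra_simps power2_eq_square)
      then have "\<nu> = \<i> \<or> \<nu> = - \<i>" by (auto simp: eq_neg_iff_add_eq_0)
      then have "\<nu> \<in> F" using i_in[OF True] subfield_uminus[OF subfield] by auto
      then have "\<nu> ^ 2 = 1" using norm sigma_base True by (simp add: power2_eq_square)
      then show False using \<open>\<nu> ^ 2 = -1\<close> by simp
    qed
  next
    case False
    then have "odd q" using prime_odd_nat[OF prime] prime_ge_2_nat[OF prime] by simp
    then have "\<nu> ^ q = 1"
      using prod_sigma_odd[OF \<nu>] norm \<nu>_pow w_power_in by simp
    then show ?thesis using \<nu>_pow root_of_unity_power_eq_1_iff[OF prime w_pow w_ne_1] by simp
  qed
qed

lemma prime_power_root_of_unity_monomial: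
  assumes "\<rho> \<in> simple_ext" "\<rho> ^ (q ^ e) = 1"
  shows "\<exists>h\<in>F. \<exists>s. \<rho> = h * \<omega> ^ s"
  using assms
proof (induction e arbitrary: \<rho>)
  case 0
  then show ?case using subfield_one[OF subfield] by (intro bexI[of _ 1] exI[of _ 0]) auto
next
  case (Suc e)
  have "(\<rho> ^ q) ^ (q ^ e) = 1" using Suc.prems(2) by (simp add: power_mult)
  then obtain h s where hs: "h \<in> F" "\<rho> ^ q = h * \<omega> ^ s"
    using Suc.IH[OF simple_ext_power[OF Suc.prems(1)]] by blast
  have "\<rho> \<noteq> 0" using Suc.prems(2) q_pos by (auto simp: power_0_left)
  then have "q dvd s" by (rule dvd_exponent_if_power_eq[OF Suc.prems(1) _ hs])
  then obtain s' where "s = q * s'" ..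
  then have "\<rho> ^ q = h * (\<omega> ^ q) ^ s'" using hs(2) by (simp add: power_mult)
  then have "\<rho> ^ q \<in> F"
    using hs(1) \<omega>_pow_in subfield by (simp add: subfield_mult subfield_power)
  then show ?case by (rule power_in_base_imp_monomial[OF Suc.prems(1)])
qed

lemma prime_power_root_of_unity_in_base:
  assumes a: "a \<in> F" and C: "C \<in> simple_ext" "C \<noteq> 0"
    and \<rho>: "\<rho> \<in> simple_ext" "\<rho> ^ (q ^ e) = 1" and eq: "a = C ^ q * \<rho>"
  shows "\<rho> \<in> F"
proof -
  obtain h s where hs: "h \<in> F" "\<rho> = h * \<omega> ^ s"
    using prime_power_root_of_unity_monomial[OF \<rho>] by blast
  have "h \<noteq> 0" using \<rho>(2) hs(2) q_pos by (auto simp: power_0_left)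
  text \<open>Multiplying by \<omega>^((q - 1) s) turns \<omega>^(-s) into a power of \<omega> with the same
    residue modulo q.\<close>
  have "C ^ q * (h * (\<omega> ^ q) ^ s) = a * \<omega> ^ ((q - 1) * s)"
    unfolding eq hs(2) power_complement[symmetric] by (simp add: mult_ac)
  moreover have "h * (\<omega> ^ q) ^ s \<noteq> 0" using \<open>h \<noteq> 0\<close> \<omega>_nonzero by simp
  ultimately have "C ^ q = a / (h * (\<omega> ^ q) ^ s) * \<omega> ^ ((q - 1) * s)"
    by (simp add: eq_divide_eq)
  moreover have "a / (h * (\<omega> ^ q) ^ s) \<in> F"
    using subfield a hs(1) \<omega>_pow_in by (auto intro: subfield_divide subfield_mult subfield_power)
  ultimately have "q dvd (q - 1) * s" using dvd_exponent_if_power_eq[OF C] by blast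
  moreover have "\<not> q dvd q - 1"
    using prime_gt_1_nat[OF prime] by (auto dest: dvd_imp_le)
  ultimately have "q dvd s" using prime_dvd_mult_iff[OF prime] by blast
  then obtain s' where "s = q * s'" ..
  then have "\<rho> = h * (\<omega> ^ q) ^ s'" using hs(2) by (simp add: power_mult)
  then show "\<rho> \<in> F"
    using hs(1) \<omega>_pow_in subfield by (simp add: subfield_mult subfield_power)
qed

lemma not_power_times_root_of_unity:
  assumes a: "k_simple F q a" and \<omega>: "\<omega> \<in> mu" and c: "c \<in> simple_ext" and \<eta>: "\<eta> \<in> mu"
  shows "a \<noteq> c ^ q * \<eta>"
proof
  assume eq: "a = c ^ q * \<eta>"
  have a_in: "a \<in> F" "a \<noteq> 0" using a unfolding k_simple_def by auto
  then have "c \<noteq> 0" using eq q_pos by auto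
  then have "\<eta> = a / c ^ q" using eq by simp
  then have \<eta>_in: "\<eta> \<in> simple_ext"
    using a_in(1) c by (simp add: simple_ext_divide simple_ext_power simple_ext_base)
  obtain i j e where \<eta>_split: "\<eta> = (\<eta> ^ i) ^ q * inverse (\<eta> ^ j)" "inverse (\<eta> ^ j) ^ (q ^ e) = 1"
    using root_of_unity_split_prime_part[OF prime \<eta>] .
  define \<rho> where "\<rho> = inverse (\<eta> ^ j)"
  define C where "C = c * \<eta> ^ i"
  have eq': "a = C ^ q * \<rho>" using eq \<eta>_split(1)
    by (simp add: C_def \<rho>_def power_mult_distrib mult_ac)
  have C_in: "C \<in> simple_ext" "C \<noteq> 0"
    unfolding C_def using c \<eta>_in \<open>c \<noteq> 0\<close> mu_nonzero[OF \<eta>]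
    by (auto intro: simple_ext_mult simple_ext_power)
  have \<rho>_in: "\<rho> \<in> simple_ext" "\<rho> \<in> mu"
    unfolding \<rho>_def using \<eta>_in \<eta>
    by (auto intro: simple_ext_inverse simple_ext_power mu_inverse mu_power)
  have "\<rho> \<in> F"
    using prime_power_root_of_unity_in_base[OF a_in(1) C_in \<rho>_in(1) _ eq'] \<eta>_split(2) \<rho>_def by blast
  moreover have "C ^ q = a / \<rho>" using eq' mu_nonzero[OF \<rho>_in(2)] by simp
  ultimately have "C ^ q \<in> F" using subfield_divide[OF subfield a_in(1)] by simp
  then obtain h s where "h \<in> F" "C = h * \<omega> ^ s" using power_in_base_imp_monomial[OF C_in(1)]
    by blast
  then have "a = h ^ q * ((\<omega> ^ s) ^ q * \<rho>)" using eq' by (simp add: power_mult_distrib mult_ac)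
  moreover have "(\<omega> ^ s) ^ q * \<rho> \<in> mu" using \<omega> \<rho>_in(2) by (intro mu_mult mu_power)
  ultimately show False using a k_simple_prime_iff[OF subfield prime] \<open>h \<in> F\<close> by blast
qed

end


section \<open>Adjoining roots of unity of prime power order\<close>

lemma k_simple_adjoin_radical:
  assumes F: "is_subfield F" and q: "prime q" and w: "w \<in> F" "w ^ q = 1" "w \<noteq> 1"
    and i: "q = 2 \<Longrightarrow> \<i> \<in> F" and \<omega>: "\<omega> \<in> mu" "\<omega> ^ q \<in> F" and a: "k_simple F q a"
  shows "k_simple (adjoin F {\<omega>}) q a"
proof (cases "\<omega> \<in> F")
  case True
  then show ?thesis using a by (simp add: adjoin_subfield_eq[OF F])
next
  case False
  interpret kummer_ext F q w \<omega> using assms False by unfold_locales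
  show ?thesis
    using not_power_times_root_of_unity[OF a \<omega>(1)] adjoin_subset_simple_ext
    by (intro k_simple_extend[OF is_subfield_adjoin q a subset_adjoin]) blast
qed

lemma k_simple_adjoin_prime_power_root:
  assumes F: "is_subfield F" and q: "prime q" and w: "w \<in> F" "w ^ q = 1" "w \<noteq> 1"
    and i: "q = 2 \<Longrightarrow> \<i> \<in> F" and \<omega>: "\<omega> \<in> mu" "\<omega> ^ (q ^ e) \<in> F" and a: "k_simple F q a"
  shows "k_simple (adjoin F {\<omega>}) q a"
  using \<omega>
proof (induction e arbitrary: \<omega>)
  case 0
  then show ?case using a by (simp add: adjoin_subfield_eq[OF F])
next
  case (Suc e)
  define G where "G = adjoin F {\<omega> ^ q}"
  have G: "is_subfield G" "F \<subseteq> G" "\<omega> ^ q \<in> G"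
    unfolding G_def by (simp_all add: is_subfield_adjoin subset_adjoin generator_in_adjoin)
  have "k_simple G q a"
    unfolding G_def using Suc mu_power by (simp add: power_mult)
  then have "k_simple (adjoin G {\<omega>}) q a"
    using k_simple_adjoin_radical[OF G(1) q _ w(2,3) _ Suc.prems(1) G(3)] w(1) i G(2) by blast
  moreover have "a \<in> F" using a unfolding k_simple_def by blast
  ultimately show ?case by (rule k_simple_adjoin_mono[OF _ G(2)])
qed

theorem lemma2p10:
  fixes P :: "complex set" and q t :: nat and a \<zeta> :: complex
  assumes "is_subfield P"
    and "fin_gen_over_Q P"
    and "\<i> \<in> P"
    and "prime q"
    and "k_simple P q a"
    and "t \<ge> 1"
    and "root_of_unity_of_order (q ^ t) \<zeta>"
  shows "k_simple (adjoin P {\<zeta>}) q a"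
proof -
  note P = assms(1) and i = assms(3) and q = assms(4) and a = assms(5)
  define w where "w = \<zeta> ^ (q ^ (t - 1))"
  have \<zeta>: "\<zeta> \<in> mu" and w: "w ^ q = 1" "w \<noteq> 1"
    unfolding w_def using root_of_unity_of_order_prime_power[OF assms(7,6) prime_gt_1_nat[OF q]]
    by auto
  define F where "F = adjoin P {w}"
  have F: "is_subfield F" "P \<subseteq> F" "w \<in> F" "\<i> \<in> F"
    unfolding F_def using i subset_adjoin by (auto simp: is_subfield_adjoin generator_in_adjoin)
  have "k_simple F q a"
    unfolding F_def by (rule k_simple_adjoin_root_of_unity[OF P q a w(1)])
  then have "k_simple (adjoin F {\<zeta>}) q a"
    using k_simple_adjoin_prime_power_root[OF F(1) q F(3) w _ \<zeta>] F(3,4) unfolding w_def by blast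
  moreover have "a \<in> P" using a unfolding k_simple_def by blast
  ultimately show ?thesis by (rule k_simple_adjoin_mono[OF _ F(2)])
qed

end
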